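(* In Case II, the potentials $u_t$ satisfy, for all $\rho\in\mathbb R$, $t\in[0,T)$: (1) $(n-k)(T-t)<u_t'(\rho)<(n+k)(T-t)$; (2) $\lim_{t\to T}u_t(\rho)=0$; (3) there is $C>0$ with $C^{-1}\frac{e^{k\rho}}{(1+e^{k\rho})^2}(T-t)<u_t''(\rho)\leqslant C\frac{e^{k\rho}}{(1+e^{k\rho})^2}(T-t)$ and $\frac{|u_t'''(\rho)|}{u_t''(\rho)}\leqslant C$.
   Context: Setting: $X=X_{n,k}$ with $1\leqslant k\leqslant n-1$, coordinates $x\in\mathbb C^n\setminus\{0\}$ on $X\setminus(D_0\cup D_\infty)$, $\rho=\log\sum|x_i|^2$. $\omega(t)$ solves $\omega(t)=\omega_0-t\,\mathrm{Ric}(\omega(t))$, $\omega(0)=\omega_0$, with $\omega_0$ Calabi symmetric; $\omega(t)=\sqrt{-1}\partial\bar\partial u_t(\rho)$, $u_t'>0$, $u_t''>0$, $u_t(0)=0$, $\lim_{\rho\to-\infty}u_t'=a_t=a_0+(k-n)t$, $\lim_{\rho\to\infty}u_t'=b_t=b_0-(k+n)t$, $0<a_0<b_0$. Case II: $a_0(n+k)=b_0(n-k)$, $T=\frac{a_0}{n-k}$, so $a_t=(n-k)(T-t)$, $b_t=(n+k)(T-t)$. *)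

theory Defs
  imports "HOL-Analysis.Analysis"
begin

definition smooth_real_on :: "(real \<Rightarrow> real) \<Rightarrow> real set \<Rightarrow> bool" where
  "smooth_real_on f S \<longleftrightarrow> (\<forall>m::nat. \<forall>x\<in>S. ((deriv ^^ m) f) differentiable (at x))"

text \<open>Calabi's criterion: the Calabi-symmetric form sqrt(-1) dd-bar u(rho) on the
  complement of D_0, D_infinity in X_{n,k} extends to a smooth Kaehler metric on X_{n,k}
  in the class determined by (a,b): u is smooth with u' > 0, u'' > 0, and
  u(rho) - a rho = f(e^{k rho}) with f smooth near 0, f'(0) > 0 (near D_0), and
  u(rho) - b rho = g(e^{-k rho}) with g smooth near 0, g'(0) > 0 (near D_infinity).\<close>
definition calabi_kaehler_potential ::
    "nat \<Rightarrow> real \<Rightarrow> real \<Rightarrow> (real \<Rightarrow> real) \<Rightarrow> bool" where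
  "calabi_kaehler_potential k a b u \<longleftrightarrow>
     smooth_real_on u UNIV \<and>
     (\<forall>\<rho>. deriv u \<rho> > 0 \<and> deriv (deriv u) \<rho> > 0) \<and>
     (\<exists>f \<delta>. \<delta> > 0 \<and> smooth_real_on f {-\<delta><..<\<delta>} \<and> deriv f 0 > 0 \<and>
        (\<forall>\<rho>. exp (real k * \<rho>) < \<delta> \<longrightarrow> u \<rho> = a * \<rho> + f (exp (real k * \<rho>)))) \<and>
     (\<exists>g \<delta>. \<delta> > 0 \<and> smooth_real_on g {-\<delta><..<\<delta>} \<and> deriv g 0 > 0 \<and>
        (\<forall>\<rho>. exp (- real k * \<rho>) < \<delta> \<longrightarrow> u \<rho> = b * \<rho> + g (exp (- real k * \<rho>))))"

end

theory Submission
  imports Defs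
begin

text \<open>Since \<open>u\<^sub>t'' > 0\<close>, \<open>u\<^sub>t'\<close> increases strictly from \<open>(n-k)(T-t)\<close> to \<open>(n+k)(T-t)\<close>,
  which is (1); with \<open>u\<^sub>t(0) = 0\<close> it gives \<open>|u\<^sub>t(\<rho>)| \<le> (n+k)(T-t)|\<rho>|\<close>, hence (2).
  For (3), compare \<open>u\<^sub>t\<close> with the rescaled initial potential \<open>(T-t)/T \<cdot> u\<^sub>0\<close>: by the flow
  equation, \<open>E = (u\<^sub>t - (T-t)/T \<cdot> u\<^sub>0 - c)/t\<close> is convex exactly where
  \<open>u\<^sub>t'' > (T-t)/T \<cdot> u\<^sub>0''\<close>, while \<open>ln u\<^sub>t'' - ln ((T-t)/T \<cdot> u\<^sub>0'')\<close> differs from \<open>E\<close> by a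
  bounded amount thanks to (1). As \<open>E'\<close> vanishes at both ends, a maximum principle on the line
  bounds \<open>E\<close>, hence \<open>u\<^sub>t'' / ((T-t) u\<^sub>0'')\<close> from above and below. The expansions of \<open>u\<^sub>0\<close> at
  \<open>D\<^sub>0\<close> and \<open>D\<^sub>\<infinity>\<close> make \<open>u\<^sub>0''\<close> comparable to \<open>e\<^sup>k\<^sup>\<rho>/(1+e\<^sup>k\<^sup>\<rho>)\<^sup>2\<close>. Finally the once
  differentiated flow equation expresses \<open>u\<^sub>t'''/u\<^sub>t''\<close> through \<open>u\<^sub>t' - u\<^sub>0'\<close>, which the same
  maximum principle, with \<open>ln u\<^sub>t'' - ln u\<^sub>0''\<close> as control function, keeps of size \<open>O(t)\<close>.\<close>

section \<open>Maximum principles on the real line\<close>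

lemma nonneg_at_left_limit:
  fixes q :: "real \<Rightarrow> real"
  assumes "isCont q s" "a < s" "\<And>y. a < y \<Longrightarrow> y < s \<Longrightarrow> q y \<ge> 0"
  shows "q s \<ge> 0"
proof -
  have "(q \<longlongrightarrow> q s) (at_left s)" using assms(1) by (simp add: isCont_def filterlim_at_split)
  moreover have "\<forall>\<^sub>F y in at_left s. q y \<ge> 0"
    using eventually_at_left_real[OF assms(2)] by eventually_elim (use assms(3) in auto)
  ultimately show ?thesis by (rule tendsto_lowerbound) simp
qed

lemma nonneg_right_of_barrier:
  fixes q q' :: "real \<Rightarrow> real"
  assumes q: "\<And>x. (q has_real_derivative q' x) (at x)"
    and start: "q x0 \<ge> 0"
    and barrier: "\<And>s. x0 \<le> s \<Longrightarrow> (\<And>y. x0 \<le> y \<Longrightarrow> y < s \<Longrightarrow> q y \<ge> 0) \<Longrightarrow> q' s > 0"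
    and "x0 \<le> y"
  shows "q y \<ge> 0"
proof (rule ccontr)
  define Z where "Z = {y. x0 \<le> y \<and> q y < 0}"
  assume "\<not> q y \<ge> 0"
  with \<open>x0 \<le> y\<close> have Z_ne: "Z \<noteq> {}" by (auto simp: Z_def)
  have Z_bdd: "bdd_below Z" unfolding Z_def by (rule bdd_belowI[of _ x0]) auto
  define s where "s = Inf Z"
  have s_ge: "x0 \<le> s" unfolding s_def using Z_ne by (intro cInf_greatest) (auto simp: Z_def)
  have s_le: "s \<le> z" if "z \<in> Z" for z unfolding s_def using that Z_bdd by (rule cInf_lower)
  have before_s: "q y \<ge> 0" if "x0 \<le> y" "y < s" for y
    using that s_le[of y] by (force simp: Z_def)
  have "q s \<ge> 0"
  proof (cases "s = x0")
    case False
    with s_ge have "x0 < s" by simp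
    have "isCont q s" using q[of s] by (rule DERIV_isCont)
    then show ?thesis using \<open>x0 < s\<close> by (rule nonneg_at_left_limit) (auto intro: before_s)
  qed (use start in simp)
  obtain d where d: "d > 0" "\<And>h. 0 < h \<Longrightarrow> h < d \<Longrightarrow> q s < q (s + h)"
    using DERIV_pos_inc_right[OF q barrier[OF s_ge before_s]] by blast
  have "s + d \<le> z" if "z \<in> Z" for z
  proof (rule ccontr)
    assume "\<not> s + d \<le> z"
    moreover have "s < z" using s_le[OF that] \<open>q s \<ge> 0\<close> that by (cases "z = s") (auto simp: Z_def)
    ultimately have "q s < q z" using d(2)[of "z - s"] by simp
    with \<open>q s \<ge> 0\<close> that show False by (simp add: Z_def)
  qed
  then have "s + d \<le> s" unfolding s_def using Z_ne by (intro cInf_greatest)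
  with d(1) show False by simp
qed

lemma superlevel_persists_right:
  fixes h h' q q' :: "real \<Rightarrow> real"
  assumes h: "\<And>x. (h has_real_derivative h' x) (at x)"
    and q: "\<And>x. (q has_real_derivative q' x) (at x)"
    and sign: "\<And>x. q x \<ge> 0 \<Longrightarrow> h' x \<ge> 0"
    and incr: "\<And>x. h x > L \<Longrightarrow> q' x > 0"
    and x0: "h x0 > L" "q x0 \<ge> 0"
    and "x0 \<le> y"
  shows "q y \<ge> 0 \<and> h x0 \<le> h y"
proof -
  have mono: "h a \<le> h b" if "a \<le> b" "\<And>y. a < y \<Longrightarrow> y < b \<Longrightarrow> q y \<ge> 0" for a b
    using that h sign by (intro DERIV_nonneg_imp_increasing_open[where f = h])
      (auto intro: DERIV_isCont continuous_at_imp_continuous_on)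
  have q_nonneg: "q y \<ge> 0" if "x0 \<le> y" for y
  proof (rule nonneg_right_of_barrier[OF q x0(2) _ that])
    fix s assume "x0 \<le> s" "\<And>y. x0 \<le> y \<Longrightarrow> y < s \<Longrightarrow> q y \<ge> 0"
    then have "h x0 \<le> h s" by (intro mono) auto
    with x0(1) show "q' s > 0" by (intro incr) simp
  qed
  show ?thesis using q_nonneg[OF \<open>x0 \<le> y\<close>] mono[OF \<open>x0 \<le> y\<close>] q_nonneg by simp
qed

lemma superlevel_persists_left:
  fixes h h' q q' :: "real \<Rightarrow> real"
  assumes h: "\<And>x. (h has_real_derivative h' x) (at x)"
    and q: "\<And>x. (q has_real_derivative q' x) (at x)"
    and sign: "\<And>x. q x \<le> 0 \<Longrightarrow> h' x \<le> 0"
    and incr: "\<And>x. h x > L \<Longrightarrow> q' x > 0"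
    and x0: "h x0 > L" "q x0 \<le> 0"
    and "y \<le> x0"
  shows "q y \<le> 0 \<and> h x0 \<le> h y"
proof -
  have h_mirror: "((\<lambda>x. h (- x)) has_real_derivative - h' (- x)) (at x)" for x
    using DERIV_mirror[THEN iffD1, OF h] .
  have q_mirror: "((\<lambda>x. - q (- x)) has_real_derivative q' (- x)) (at x)" for x
    using DERIV_minus[OF DERIV_mirror[THEN iffD1, OF q]] by simp
  have "- q (- (- y)) \<ge> 0 \<and> h (- (- x0)) \<le> h (- (- y))"
    by (rule superlevel_persists_right[OF h_mirror q_mirror, where L = L])
      (use sign incr x0 \<open>y \<le> x0\<close> in auto)
  then show ?thesis by simp
qed

lemma maximum_principle:
  fixes h h' q q' :: "real \<Rightarrow> real"
  assumes h: "\<And>x. (h has_real_derivative h' x) (at x)"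
    and q: "\<And>x. (q has_real_derivative q' x) (at x)"
    and sign_nonneg: "\<And>x. q x \<ge> 0 \<Longrightarrow> h' x \<ge> 0"
    and sign_nonpos: "\<And>x. q x \<le> 0 \<Longrightarrow> h' x \<le> 0"
    and incr: "\<And>x. h x > L \<Longrightarrow> q' x > 0"
    and "(h \<longlongrightarrow> l1) at_bot" "l1 \<le> L"
    and "(h \<longlongrightarrow> l2) at_top" "l2 \<le> L"
  shows "h x \<le> L"
proof (rule ccontr)
  assume "\<not> h x \<le> L"
  then have x: "h x > L" by simp
  show False
  proof (cases "q x \<ge> 0")
    case True
    have "\<forall>\<^sub>F y in at_top. h x \<le> h y"
      using eventually_ge_at_top[of x]
      by eventually_elim (use superlevel_persists_right[OF h q sign_nonneg incr x True] in blast)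
    with \<open>(h \<longlongrightarrow> l2) at_top\<close> have "h x \<le> l2" by (rule tendsto_lowerbound) simp
    with x \<open>l2 \<le> L\<close> show False by simp
  next
    case False
    have "\<forall>\<^sub>F y in at_bot. h x \<le> h y"
      using eventually_le_at_bot[of x]
      by eventually_elim (use superlevel_persists_left[OF h q sign_nonpos incr x] False in auto)
    with \<open>(h \<longlongrightarrow> l1) at_bot\<close> have "h x \<le> l1" by (rule tendsto_lowerbound) simp
    with x \<open>l1 \<le> L\<close> show False by simp
  qed
qed

lemma convex_superlevel_right:
  fixes h q q' :: "real \<Rightarrow> real"
  assumes h: "\<And>x. (h has_real_derivative q x) (at x)"
    and q: "\<And>x. (q has_real_derivative q' x) (at x)"
    and incr: "\<And>x. h x > L \<Longrightarrow> q' x > 0"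
    and "(q \<longlongrightarrow> 0) at_top"
    and "h x > L"
  shows "q x < 0"
proof (rule ccontr)
  assume "\<not> q x < 0"
  then have persist: "q y \<ge> 0 \<and> h x \<le> h y" if "x \<le> y" for y
    using superlevel_persists_right[OF h q _ incr \<open>h x > L\<close> _ that] by simp
  have q_strict_mono: "q a < q b" if "x \<le> a" "a < b" for a b
    using that(2)
  proof (rule DERIV_pos_imp_increasing[where f = q])
    fix y assume "a \<le> y" "y \<le> b"
    with that persist[of y] \<open>h x > L\<close> have "q' y > 0" by (intro incr) auto
    then show "\<exists>d. (q has_real_derivative d) (at y) \<and> 0 < d" using q by blast
  qed
  have "\<forall>\<^sub>F y in at_top. q (x + 1) \<le> q y"
    using eventually_ge_at_top[of "x + 1"]
    by eventually_elim (metis q_strict_mono less_add_one order.order_iff_strict)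
  with \<open>(q \<longlongrightarrow> 0) at_top\<close> have "q (x + 1) \<le> 0" by (rule tendsto_lowerbound) simp
  moreover have "q x < q (x + 1)" by (rule q_strict_mono) auto
  ultimately show False using \<open>\<not> q x < 0\<close> by simp
qed

lemma convex_maximum_principle:
  fixes h q q' :: "real \<Rightarrow> real"
  assumes h: "\<And>x. (h has_real_derivative q x) (at x)"
    and q: "\<And>x. (q has_real_derivative q' x) (at x)"
    and incr: "\<And>x. h x > L \<Longrightarrow> q' x > 0"
    and "(q \<longlongrightarrow> 0) at_bot" "(q \<longlongrightarrow> 0) at_top"
  shows "h x \<le> L"
proof (rule ccontr)
  assume "\<not> h x \<le> L"
  then have "h x > L" by simp
  have "q x < 0"
    using convex_superlevel_right[OF h q incr \<open>(q \<longlongrightarrow> 0) at_top\<close> \<open>h x > L\<close>] .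
  moreover have "- q (- (- x)) < 0"
  proof (rule convex_superlevel_right[where h = "\<lambda>x. h (- x)" and q = "\<lambda>x. - q (- x)"
        and q' = "\<lambda>x. q' (- x)" and L = L])
    show "((\<lambda>x. h (- x)) has_real_derivative - q (- y)) (at y)" for y
      using DERIV_mirror[THEN iffD1, OF h, of y] by simp
    show "((\<lambda>x. - q (- x)) has_real_derivative q' (- y)) (at y)" for y
      using DERIV_minus[OF DERIV_mirror[THEN iffD1, OF q]] by simp
    show "((\<lambda>x. - q (- x)) \<longlongrightarrow> 0) at_top"
      using \<open>(q \<longlongrightarrow> 0) at_bot\<close> by (auto simp: at_top_mirror filterlim_filtermap
        intro: tendsto_minus_cancel_left[THEN iffD1])
  qed (use incr \<open>h x > L\<close> in auto)
  ultimately show False by simp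
qed

lemma abs_le_by_maximum_principle:
  fixes h h' q q' :: "real \<Rightarrow> real"
  assumes h: "\<And>x. (h has_real_derivative h' x) (at x)"
    and q: "\<And>x. (q has_real_derivative q' x) (at x)"
    and sign_nonneg: "\<And>x. q x \<ge> 0 \<Longrightarrow> h' x \<ge> 0"
    and sign_nonpos: "\<And>x. q x \<le> 0 \<Longrightarrow> h' x \<le> 0"
    and above: "\<And>x. h x > L \<Longrightarrow> q' x > 0"
    and below: "\<And>x. h x < - L \<Longrightarrow> q' x < 0"
    and "(h \<longlongrightarrow> l1) at_bot" "\<bar>l1\<bar> \<le> L"
    and "(h \<longlongrightarrow> l2) at_top" "\<bar>l2\<bar> \<le> L"
  shows "\<bar>h x\<bar> \<le> L"
proof -
  have "h x \<le> L"
    using maximum_principle[OF h q sign_nonneg sign_nonpos above assms(7) _ assms(9)] assms(8,10)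
    by simp
  moreover have "- h x \<le> L"
  proof (rule maximum_principle[where h = "\<lambda>x. - h x" and q = "\<lambda>x. - q x"])
    show "((\<lambda>x. - h x) has_real_derivative - h' x) (at x)" for x using h by (rule DERIV_minus)
    show "((\<lambda>x. - q x) has_real_derivative - q' x) (at x)" for x using q by (rule DERIV_minus)
    show "((\<lambda>x. - h x) \<longlongrightarrow> - l1) at_bot" "((\<lambda>x. - h x) \<longlongrightarrow> - l2) at_top"
      using assms(7,9) by (auto intro: tendsto_minus)
  qed (use sign_nonneg sign_nonpos below assms(8,10) in force)+
  ultimately show ?thesis by simp
qed

lemma between_by_convex_maximum_principle:
  fixes E E' E'' :: "real \<Rightarrow> real"
  assumes E: "\<And>x. (E has_real_derivative E' x) (at x)"
    and E': "\<And>x. (E' has_real_derivative E'' x) (at x)"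
    and "(E' \<longlongrightarrow> 0) at_bot" "(E' \<longlongrightarrow> 0) at_top"
    and above: "\<And>x. E x > M \<Longrightarrow> E'' x > 0"
    and below: "\<And>x. E x < M' \<Longrightarrow> E'' x < 0"
  shows "M' \<le> E x \<and> E x \<le> M"
proof
  show "E x \<le> M" using convex_maximum_principle[OF E E' above assms(3,4)] .
  have "- E x \<le> - M'"
  proof (rule convex_maximum_principle[where h = "\<lambda>x. - E x" and q = "\<lambda>x. - E' x"])
    show "((\<lambda>x. - E x) has_real_derivative - E' x) (at x)" for x using E by (rule DERIV_minus)
    show "((\<lambda>x. - E' x) has_real_derivative - E'' x) (at x)" for x using E' by (rule DERIV_minus)
    show "((\<lambda>x. - E' x) \<longlongrightarrow> 0) at_bot" "((\<lambda>x. - E' x) \<longlongrightarrow> 0) at_top"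
      using assms(3,4) tendsto_minus by fastforce+
  qed (use below in force)
  then show "M' \<le> E x" by simp
qed

lemma bounded_of_tendsto_at_bot_at_top:
  fixes h :: "real \<Rightarrow> real"
  assumes "continuous_on UNIV h" "(h \<longlongrightarrow> l1) at_bot" "(h \<longlongrightarrow> l2) at_top"
  obtains K where "\<And>x. \<bar>h x\<bar> \<le> K"
proof -
  have "\<forall>\<^sub>F x in at_bot. dist (h x) l1 < 1" using assms(2) by (rule tendstoD) simp
  then obtain N1 where N1: "\<And>x. x \<le> N1 \<Longrightarrow> dist (h x) l1 < 1"
    by (auto simp: eventually_at_bot_linorder)
  have "\<forall>\<^sub>F x in at_top. dist (h x) l2 < 1" using assms(3) by (rule tendstoD) simp
  then obtain N2 where N2: "\<And>x. x \<ge> N2 \<Longrightarrow> dist (h x) l2 < 1"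
    by (auto simp: eventually_at_top_linorder)
  have "compact (h ` {N1..N2})"
    using assms(1) by (intro compact_continuous_image) (auto intro: continuous_on_subset)
  then obtain B where B: "\<And>y. y \<in> h ` {N1..N2} \<Longrightarrow> \<bar>y\<bar> \<le> B"
    using compact_imp_bounded bounded_real by metis
  have "\<bar>h x\<bar> \<le> \<bar>B\<bar> + \<bar>l1\<bar> + \<bar>l2\<bar> + 1" for x
    using N1[of x] N2[of x] B[of "h x"] by (force simp: dist_real_def)
  then show thesis by (rule that)
qed

lemma bounded_ln_of_tendsto_at_bot_at_top:
  fixes h :: "real \<Rightarrow> real"
  assumes "continuous_on UNIV h" "\<And>x. h x > 0"
    and "(h \<longlongrightarrow> l1) at_bot" "l1 > 0" "(h \<longlongrightarrow> l2) at_top" "l2 > 0"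
  obtains K where "\<And>x. \<bar>ln (h x)\<bar> \<le> K"
proof (rule bounded_of_tendsto_at_bot_at_top)
  show "continuous_on UNIV (\<lambda>x. ln (h x))"
    using assms(1,2) by (intro continuous_intros) (auto simp: less_le)
  show "((\<lambda>x. ln (h x)) \<longlongrightarrow> ln l1) at_bot" "((\<lambda>x. ln (h x)) \<longlongrightarrow> ln l2) at_top"
    using assms(3-6) by (auto intro!: tendsto_intros)
qed (rule that)

lemma strictly_between_limits:
  fixes f f' :: "real \<Rightarrow> real"
  assumes f: "\<And>x. (f has_real_derivative f' x) (at x)" and pos: "\<And>x. f' x > 0"
    and "(f \<longlongrightarrow> A) at_bot" "(f \<longlongrightarrow> B) at_top"
  shows "A < f x \<and> f x < B"
proof -
  have strict_mono: "f a < f b" if "a < b" for a b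
    using that f pos by (intro DERIV_pos_imp_increasing[where f = f]) blast+
  have "\<forall>\<^sub>F y in at_top. f (x + 1) \<le> f y"
    using eventually_ge_at_top[of "x + 1"] by eventually_elim (metis strict_mono le_less)
  with \<open>(f \<longlongrightarrow> B) at_top\<close> have "f (x + 1) \<le> B" by (rule tendsto_lowerbound) simp
  moreover have "\<forall>\<^sub>F y in at_bot. f y \<le> f (x - 1)"
    using eventually_le_at_bot[of "x - 1"] by eventually_elim (metis strict_mono le_less)
  with \<open>(f \<longlongrightarrow> A) at_bot\<close> have "A \<le> f (x - 1)" by (rule tendsto_upperbound) simp
  moreover have "f (x - 1) < f x" "f x < f (x + 1)" by (auto intro: strict_mono)
  ultimately show ?thesis by simp
qed

definition logistic_density :: "real \<Rightarrow> real \<Rightarrow> real" where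
  "logistic_density k \<rho> = exp (k * \<rho>) / (1 + exp (k * \<rho>))\<^sup>2"

lemma one_plus_exp_pos: "1 + exp (x :: real) > 0"
  by (simp add: add_pos_pos)

lemma logistic_density_minus: "logistic_density (- k) \<rho> = logistic_density k \<rho>"
proof -
  have e: "exp (- k * \<rho>) = 1 / exp (k * \<rho>)" by (simp add: exp_minus inverse_eq_divide)
  have "exp (k * \<rho>) > 0" by simp
  then show ?thesis unfolding logistic_density_def e
    by (simp add: field_simps power2_eq_square)
qed

lemma logistic_density_pos: "logistic_density k \<rho> > 0"
  using one_plus_exp_pos[of "k * \<rho>"] by (simp add: logistic_density_def)

lemma logistic_density_le_1: "logistic_density k \<rho> \<le> 1"
proof -
  have "exp (k * \<rho>) \<le> (1 + exp (k * \<rho>))\<^sup>2"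
    by (simp add: power2_eq_square algebra_simps add_pos_pos)
  then show ?thesis using one_plus_exp_pos[of "k * \<rho>"] by (simp add: logistic_density_def)
qed

lemma continuous_on_logistic_density: "continuous_on S (logistic_density k)"
  unfolding logistic_density_def[abs_def]
  using one_plus_exp_pos by (intro continuous_intros) (auto simp: less_le)

section \<open>Comparison estimates for two potentials\<close>

lemma mult_ln_ratio_bounds:
  fixes \<alpha> \<beta> s y m :: real
  assumes "0 < \<alpha>" "0 < s" "\<alpha> * s < y" "y < \<beta> * s" "0 \<le> m"
  shows "m * ln \<alpha> \<le> m * (ln y - ln s) \<and> m * (ln y - ln s) \<le> m * ln \<beta>"
proof -
  have "0 < \<alpha> * s" using assms(1,2) by simp
  with assms(3,4) have "0 < \<beta> * s" by linarith
  with assms(2) have "0 < \<beta>" by (simp add: zero_less_mult_iff)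
  have "ln (\<alpha> * s) < ln y" "ln y < ln (\<beta> * s)" using \<open>0 < \<alpha> * s\<close> assms(3,4) by auto
  then have "ln \<alpha> < ln y - ln s" "ln y - ln s < ln \<beta>"
    using \<open>0 < \<beta>\<close> assms(1,2) by (simp_all add: ln_mult)
  with assms(5) show ?thesis by (auto intro!: mult_left_mono)
qed

lemma flow_comparison_identity:
  fixes t s T N m c :: real
  assumes "t > 0" "T = t + s" "T > 0" "N = m + 1"
    and flow: "t * (ln (U'' x) + m * ln (U' x)) = U x - V x + t * N * x - c"
  shows "ln (U'' x) - ln s - (N * x - V x / T)
    = ((U x - (s / T) * V x - c) / t - N * ln s) - m * (ln (U' x) - ln s)"
proof -
  have "(s / T) * V x + t * (V x / T) = ((s + t) / T) * V x"
    by (simp add: add_divide_distrib algebra_simps)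
  then have V_split: "V x = (s / T) * V x + t * (V x / T)"
    using assms(2,3) by (simp add: add.commute)
  have "t * ((U x - (s / T) * V x - c) / t) = U x - (s / T) * V x - c" using \<open>t > 0\<close> by simp
  then have "t * (ln (U'' x) - ln s - (N * x - V x / T))
      = t * (((U x - (s / T) * V x - c) / t - N * ln s) - m * (ln (U' x) - ln s))"
    using flow V_split by (simp add: \<open>N = m + 1\<close> algebra_simps)
  with \<open>t > 0\<close> show ?thesis by simp
qed

lemma log_second_deriv_estimate:
  fixes U U' U'' V V' V'' :: "real \<Rightarrow> real" and t s T N m c K \<alpha> \<beta> :: real
  assumes "t > 0" "s > 0" "T = t + s"
    and U: "\<And>x. (U has_real_derivative U' x) (at x)" "\<And>x. (U' has_real_derivative U'' x) (at x)"
    and V: "\<And>x. (V has_real_derivative V' x) (at x)" "\<And>x. (V' has_real_derivative V'' x) (at x)"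
    and U'_bounds: "\<And>x. \<alpha> * s < U' x \<and> U' x < \<beta> * s" and "\<alpha> > 0"
    and U''_pos: "\<And>x. U'' x > 0" and V''_pos: "\<And>x. V'' x > 0"
    and "N = m + 1" "m \<ge> 0"
    and flow: "\<And>x. t * (ln (U'' x) + m * ln (U' x)) = U x - V x + t * N * x - c"
    and V_bound: "\<And>x. \<bar>ln (V'' x) + V x / T - N * x\<bar> \<le> K"
    and "(U' \<longlongrightarrow> \<alpha> * s) at_bot" "(V' \<longlongrightarrow> \<alpha> * T) at_bot"
    and "(U' \<longlongrightarrow> \<beta> * s) at_top" "(V' \<longlongrightarrow> \<beta> * T) at_top"
  shows "\<bar>ln (U'' x) - ln s - (N * x - V x / T)\<bar> \<le> K + \<bar>ln T\<bar> + m * (ln \<beta> - ln \<alpha>)"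
proof -
  have "T > 0" using assms(1-3) by simp
  \<comment> \<open>\<open>E''\<close> has the sign of \<open>U'' - (s/T) V''\<close>, while by the flow equation \<open>E\<close> differs
    from the quantity to be bounded only by the bounded term \<open>m (ln U' - ln s)\<close>.\<close>
  define E where "E x = (U x - (s / T) * V x - c) / t - N * ln s" for x
  define E' where "E' x = (U' x - (s / T) * V' x) / t" for x
  define E'' where "E'' x = (U'' x - (s / T) * V'' x) / t" for x
  have E: "(E has_real_derivative E' x) (at x)" for x
    unfolding E_def[abs_def] E'_def using U(1) V(1) \<open>t > 0\<close> \<open>T > 0\<close>
    by (auto intro!: derivative_eq_intros)
  have E': "(E' has_real_derivative E'' x) (at x)" for x
    unfolding E'_def[abs_def] E''_def using U(2) V(2) \<open>t > 0\<close> \<open>T > 0\<close>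
    by (auto intro!: derivative_eq_intros)
  have "(E' \<longlongrightarrow> (\<alpha> * s - (s / T) * (\<alpha> * T)) / t) at_bot"
    unfolding E'_def[abs_def] using assms(16,17) \<open>t > 0\<close> by (intro tendsto_intros) auto
  then have E'_bot: "(E' \<longlongrightarrow> 0) at_bot" using \<open>T > 0\<close> by simp
  have "(E' \<longlongrightarrow> (\<beta> * s - (s / T) * (\<beta> * T)) / t) at_top"
    unfolding E'_def[abs_def] using assms(18,19) \<open>t > 0\<close> by (intro tendsto_intros) auto
  then have E'_top: "(E' \<longlongrightarrow> 0) at_top" using \<open>T > 0\<close> by simp
  have log_U': "m * ln \<alpha> \<le> m * (ln (U' x) - ln s) \<and> m * (ln (U' x) - ln s) \<le> m * ln \<beta>" for x
    using mult_ln_ratio_bounds \<open>\<alpha> > 0\<close> \<open>s > 0\<close> U'_bounds[of x] \<open>m \<ge> 0\<close> by blast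
  have E_eq: "ln (U'' x) - ln s - (N * x - V x / T) = E x - m * (ln (U' x) - ln s)" for x
    unfolding E_def using flow_comparison_identity \<open>t > 0\<close> \<open>T = t + s\<close> \<open>T > 0\<close> \<open>N = m + 1\<close> flow
    by blast
  have log_ratio: "ln ((s / T) * V'' x) = ln s - ln T + ln (V'' x)" for x
    using \<open>s > 0\<close> \<open>T > 0\<close> V''_pos[of x] by (simp add: ln_mult ln_div)
  have E''_pos: "E'' x > 0" if "ln ((s / T) * V'' x) < ln (U'' x)" for x
    using that \<open>s > 0\<close> \<open>T > 0\<close> \<open>t > 0\<close> U''_pos[of x] V''_pos[of x]
    by (simp add: E''_def zero_less_divide_iff)
  have E''_neg: "E'' x < 0" if "ln (U'' x) < ln ((s / T) * V'' x)" for x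
    using that \<open>s > 0\<close> \<open>T > 0\<close> \<open>t > 0\<close> U''_pos[of x] V''_pos[of x]
    by (simp add: E''_def divide_less_0_iff)
  have E_bounds: "- K - ln T + m * ln \<alpha> \<le> E x \<and> E x \<le> K - ln T + m * ln \<beta>"
  proof (rule between_by_convex_maximum_principle[OF E E' E'_bot E'_top])
    fix x assume "E x > K - ln T + m * ln \<beta>"
    then show "E'' x > 0"
      using E_eq[of x] log_ratio[of x] V_bound[of x] log_U'[of x] by (intro E''_pos) (simp add: abs_le_iff)
  next
    fix x assume "E x < - K - ln T + m * ln \<alpha>"
    then show "E'' x < 0"
      using E_eq[of x] log_ratio[of x] V_bound[of x] log_U'[of x] by (intro E''_neg) (simp add: abs_le_iff)
  qed
  show ?thesis
    using E_eq[of x] E_bounds log_U'[of x] abs_ge_self[of "ln T"] abs_ge_minus_self[of "ln T"]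
    unfolding abs_le_iff right_diff_distrib by linarith
qed

lemma third_deriv_ratio_estimate:
  fixes U' U'' U''' V' V'' V''' :: "real \<Rightarrow> real" and t N m K0 K1 l1 l2 :: real
  assumes "t > 0"
    and U: "\<And>x. (U' has_real_derivative U'' x) (at x)" "\<And>x. (U'' has_real_derivative U''' x) (at x)"
    and V: "\<And>x. (V' has_real_derivative V'' x) (at x)" "\<And>x. (V'' has_real_derivative V''' x) (at x)"
    and U'_pos: "\<And>x. U' x > 0" and U''_pos: "\<And>x. U'' x > 0" and V''_pos: "\<And>x. V'' x > 0"
    and flow': "\<And>x. U' x - V' x = t * (- N + m * (U'' x / U' x) + U''' x / U'' x)"
    and K1: "\<And>x. U'' x / U' x \<le> K1" and K0: "\<And>x. \<bar>V''' x / V'' x\<bar> \<le> K0"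
    and "m \<ge> 0" "N \<ge> 0"
    and "((\<lambda>x. U' x - V' x) \<longlongrightarrow> l1) at_bot" "\<bar>l1\<bar> \<le> 2 * N * t"
    and "((\<lambda>x. U' x - V' x) \<longlongrightarrow> l2) at_top" "\<bar>l2\<bar> \<le> 2 * N * t"
  shows "\<bar>U''' x / U'' x\<bar> \<le> K0 + 2 * m * K1 + 3 * N"
proof -
  define C where "C = K0 + m * K1 + 2 * N"
  have "K0 \<ge> 0" using K0[of 0] by linarith
  have m_ratio: "0 \<le> m * (U'' y / U' y) \<and> m * (U'' y / U' y) \<le> m * K1" for y
    using \<open>m \<ge> 0\<close> U'_pos[of y] U''_pos[of y] K1[of y]
    by (simp add: mult_left_mono del: times_divide_eq_right)
  then have "m * K1 \<ge> 0" by (meson order.trans)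
  have ratio_eq: "U''' y / U'' y = (U' y - V' y) / t + N - m * (U'' y / U' y)" for y
    using flow'[of y] \<open>t > 0\<close> by (simp add: field_simps)
  have "\<bar>U' x - V' x\<bar> \<le> C * t"
  proof (rule abs_le_by_maximum_principle[where h = "\<lambda>x. U' x - V' x"
        and q = "\<lambda>x. ln (U'' x) - ln (V'' x)"])
    show "((\<lambda>x. U' x - V' x) has_real_derivative U'' x - V'' x) (at x)" for x
      using U(1)[of x] V(1)[of x] by (rule DERIV_diff)
    show "((\<lambda>x. ln (U'' x) - ln (V'' x)) has_real_derivative U''' x / U'' x - V''' x / V'' x) (at x)" for x
      using U(2)[of x] V(2)[of x] U''_pos[of x] V''_pos[of x]
      by (auto intro!: derivative_eq_intros simp: field_simps)
    show "ln (U'' x) - ln (V'' x) \<ge> 0 \<Longrightarrow> U'' x - V'' x \<ge> 0"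
      "ln (U'' x) - ln (V'' x) \<le> 0 \<Longrightarrow> U'' x - V'' x \<le> 0" for x
      using U''_pos[of x] V''_pos[of x] by simp_all
    show "U''' x / U'' x - V''' x / V'' x > 0" if "U' x - V' x > C * t" for x
    proof -
      have "(U' x - V' x) / t > C" using that \<open>t > 0\<close> by (simp add: field_simps)
      then show ?thesis
        using ratio_eq[of x] m_ratio[of x] K0[of x] \<open>N \<ge> 0\<close> unfolding C_def abs_le_iff by linarith
    qed
    show "U''' x / U'' x - V''' x / V'' x < 0" if "U' x - V' x < - (C * t)" for x
    proof -
      have "(U' x - V' x) / t < - C" using that \<open>t > 0\<close> by (simp add: field_simps)
      then show ?thesis
        using ratio_eq[of x] m_ratio[of x] K0[of x] \<open>m * K1 \<ge> 0\<close> \<open>N \<ge> 0\<close>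
        unfolding C_def abs_le_iff by linarith
    qed
    have "2 * N * t \<le> C * t"
      using \<open>t > 0\<close> \<open>K0 \<ge> 0\<close> \<open>m * K1 \<ge> 0\<close> by (intro mult_right_mono) (auto simp: C_def)
    then show "\<bar>l1\<bar> \<le> C * t" "\<bar>l2\<bar> \<le> C * t" using assms(15,17) by auto
  qed fact+
  then have "\<bar>(U' x - V' x) / t\<bar> \<le> C" using \<open>t > 0\<close> by (simp add: abs_div field_simps)
  moreover have "2 * m * K1 = 2 * (m * K1)" by simp
  ultimately show ?thesis
    using ratio_eq[of x] m_ratio[of x] \<open>m * K1 \<ge> 0\<close> \<open>N \<ge> 0\<close> unfolding C_def abs_le_iff by linarith
qed

lemma smooth_real_on_has_derivs:
  assumes "smooth_real_on f S" "x \<in> S"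
  shows "(f has_real_derivative deriv f x) (at x)"
    "(deriv f has_real_derivative deriv (deriv f) x) (at x)"
    "(deriv (deriv f) has_real_derivative deriv (deriv (deriv f)) x) (at x)"
    "(deriv (deriv (deriv f)) has_real_derivative deriv (deriv (deriv (deriv f))) x) (at x)"
proof -
  have "((deriv ^^ m) f) differentiable (at x)" for m
    using assms unfolding smooth_real_on_def by blast
  from this[of 0] this[of 1] this[of 2] this[of 3] show
    "(f has_real_derivative deriv f x) (at x)"
    "(deriv f has_real_derivative deriv (deriv f) x) (at x)"
    "(deriv (deriv f) has_real_derivative deriv (deriv (deriv f)) x) (at x)"
    "(deriv (deriv (deriv f)) has_real_derivative deriv (deriv (deriv (deriv f))) x) (at x)"
    by (simp_all add: DERIV_deriv_iff_real_differentiable numeral_2_eq_2 numeral_3_eq_3)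
qed

lemma deriv_eq_on_open:
  assumes "open S" "x \<in> S" "\<And>y. y \<in> S \<Longrightarrow> h y = H y" "(H has_real_derivative D) (at x)"
  shows "deriv h x = D"
  using has_field_derivative_transform_within_open[OF assms(4,1,2)] assms(3)
  by (auto intro: DERIV_imp_deriv)

text \<open>Near an end of \<open>X\<^sub>n\<^sub>,\<^sub>k\<close> a Calabi potential is \<open>a \<rho> + f (e\<^sup>\<kappa>\<^sup>\<rho>)\<close> with \<open>f\<close> smooth
  at \<open>0\<close>; here \<open>\<kappa> = k\<close> with \<open>F = at_bot\<close> at \<open>D\<^sub>0\<close>, and \<open>\<kappa> = -k\<close> with \<open>F = at_top\<close> at \<open>D\<^sub>\<infinity>\<close>.\<close>

locale calabi_end =
  fixes u f :: "real \<Rightarrow> real" and a \<kappa> \<delta> :: real and F :: "real filter"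
  assumes smooth: "smooth_real_on f {-\<delta><..<\<delta>}" and \<delta>_pos: "\<delta> > 0"
    and f'_pos: "deriv f 0 > 0" and \<kappa>_nonzero: "\<kappa> \<noteq> 0"
    and expansion: "\<And>\<rho>. exp (\<kappa> * \<rho>) < \<delta> \<Longrightarrow> u \<rho> = a * \<rho> + f (exp (\<kappa> * \<rho>))"
    and exp_tendsto_0: "((\<lambda>\<rho>. exp (\<kappa> * \<rho>)) \<longlongrightarrow> 0) F"
begin

abbreviation (input) f' where "f' \<equiv> deriv f"
abbreviation (input) f'' where "f'' \<equiv> deriv (deriv f)"
abbreviation (input) f''' where "f''' \<equiv> deriv (deriv (deriv f))"

lemma deriv_formulas:
  assumes "exp (\<kappa> * \<rho>) < \<delta>"
  defines "s \<equiv> exp (\<kappa> * \<rho>)"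
  shows "deriv u \<rho> = a + \<kappa> * s * f' s"
    "deriv (deriv u) \<rho> = \<kappa>\<^sup>2 * s * (f' s + s * f'' s)"
    "deriv (deriv (deriv u)) \<rho> = \<kappa>^3 * s * (f' s + 3 * s * f'' s + s\<^sup>2 * f''' s)"
proof -
  define S where "S = {y. exp (\<kappa> * y) < \<delta>}"
  have "open S" unfolding S_def by (intro open_Collect_less continuous_intros)
  have "exp (\<kappa> * y) \<in> {-\<delta><..<\<delta>}" if "y \<in> S" for y
    using that less_trans[OF _ exp_gt_zero, of "- \<delta>"] \<delta>_pos unfolding S_def by auto
  note f = smooth_real_on_has_derivs[OF smooth this]
  have exp: "((\<lambda>y. exp (\<kappa> * y)) has_real_derivative exp (\<kappa> * y) * \<kappa>) (at y)" for y
    by (auto intro!: derivative_eq_intros)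
  note chain = DERIV_chain2[OF _ exp]
  have d1: "deriv u y = a + \<kappa> * exp (\<kappa> * y) * f' (exp (\<kappa> * y))" if "y \<in> S" for y
  proof (rule deriv_eq_on_open[OF \<open>open S\<close> that])
    show "u z = a * z + f (exp (\<kappa> * z))" if "z \<in> S" for z
      using expansion that by (auto simp: S_def)
    show "((\<lambda>z. a * z + f (exp (\<kappa> * z))) has_real_derivative a + \<kappa> * exp (\<kappa> * y) * f' (exp (\<kappa> * y))) (at y)"
      using chain[OF f(1)[OF that]] by (auto intro!: derivative_eq_intros)
  qed
  have d2: "deriv (deriv u) y = \<kappa>\<^sup>2 * exp (\<kappa> * y) * (f' (exp (\<kappa> * y)) + exp (\<kappa> * y) * f'' (exp (\<kappa> * y)))"
    if "y \<in> S" for y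
  proof (rule deriv_eq_on_open[OF \<open>open S\<close> that d1])
    show "((\<lambda>z. a + \<kappa> * exp (\<kappa> * z) * f' (exp (\<kappa> * z))) has_real_derivative
        \<kappa>\<^sup>2 * exp (\<kappa> * y) * (f' (exp (\<kappa> * y)) + exp (\<kappa> * y) * f'' (exp (\<kappa> * y)))) (at y)"
      using chain[OF f(2)[OF that]]
      by (auto intro!: derivative_eq_intros simp: power2_eq_square algebra_simps)
  qed
  have d3: "deriv (deriv (deriv u)) y = \<kappa>^3 * exp (\<kappa> * y) * (f' (exp (\<kappa> * y))
      + 3 * exp (\<kappa> * y) * f'' (exp (\<kappa> * y)) + (exp (\<kappa> * y))\<^sup>2 * f''' (exp (\<kappa> * y)))"
    if "y \<in> S" for y
  proof (rule deriv_eq_on_open[OF \<open>open S\<close> that d2])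
    show "((\<lambda>z. \<kappa>\<^sup>2 * exp (\<kappa> * z) * (f' (exp (\<kappa> * z)) + exp (\<kappa> * z) * f'' (exp (\<kappa> * z))))
        has_real_derivative \<kappa>^3 * exp (\<kappa> * y) * (f' (exp (\<kappa> * y))
          + 3 * exp (\<kappa> * y) * f'' (exp (\<kappa> * y)) + (exp (\<kappa> * y))\<^sup>2 * f''' (exp (\<kappa> * y)))) (at y)"
      using chain[OF f(2)[OF that]] chain[OF f(3)[OF that]]
      by (auto intro!: derivative_eq_intros simp: power2_eq_square power3_eq_cube algebra_simps)
  qed
  have "\<rho> \<in> S" using assms(1) by (simp add: S_def)
  with d1 d2 d3 show "deriv u \<rho> = a + \<kappa> * s * f' s"
    "deriv (deriv u) \<rho> = \<kappa>\<^sup>2 * s * (f' s + s * f'' s)"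
    "deriv (deriv (deriv u)) \<rho> = \<kappa>^3 * s * (f' s + 3 * s * f'' s + s\<^sup>2 * f''' s)"
    unfolding s_def by auto
qed

lemma tendsto_through_expansion:
  assumes "isCont g 0" "\<And>\<rho>. exp (\<kappa> * \<rho>) < \<delta> \<Longrightarrow> G \<rho> = g (exp (\<kappa> * \<rho>))"
  shows "(G \<longlongrightarrow> g 0) F"
proof (rule Lim_transform_eventually)
  show "((\<lambda>\<rho>. g (exp (\<kappa> * \<rho>))) \<longlongrightarrow> g 0) F"
    using isCont_tendsto_compose[OF assms(1) exp_tendsto_0] .
  show "\<forall>\<^sub>F \<rho> in F. g (exp (\<kappa> * \<rho>)) = G \<rho>"
    using order_tendstoD(2)[OF exp_tendsto_0 \<delta>_pos] by eventually_elim (simp add: assms(2))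
qed

lemma isCont_derivs_at_0: "isCont f 0" "isCont f' 0" "isCont f'' 0" "isCont f''' 0"
proof -
  have "0 \<in> {-\<delta><..<\<delta>}" using \<delta>_pos by simp
  from smooth_real_on_has_derivs[OF smooth this]
  show "isCont f 0" "isCont f' 0" "isCont f'' 0" "isCont f''' 0"
    by (auto dest: DERIV_isCont)
qed

lemma second_deriv_asymptotics:
  "((\<lambda>\<rho>. deriv (deriv u) \<rho> / logistic_density \<kappa> \<rho>) \<longlongrightarrow> \<kappa>\<^sup>2 * f' 0) F"
proof -
  have "isCont (\<lambda>x. \<kappa>\<^sup>2 * (f' x + x * f'' x) * (1 + x)\<^sup>2) 0"
    using isCont_derivs_at_0 by (intro continuous_intros) auto
  then show ?thesis
    by (rule tendsto_through_expansion[where g = "\<lambda>x. \<kappa>\<^sup>2 * (f' x + x * f'' x) * (1 + x)\<^sup>2", simplified])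
      (simp add: deriv_formulas logistic_density_def)
qed

lemma third_deriv_ratio_asymptotics:
  "((\<lambda>\<rho>. deriv (deriv (deriv u)) \<rho> / deriv (deriv u) \<rho>) \<longlongrightarrow> \<kappa>) F"
proof -
  define g where "g x = \<kappa> * (f' x + 3 * x * f'' x + x\<^sup>2 * f''' x) / (f' x + x * f'' x)" for x
  have "isCont g 0"
    unfolding g_def using isCont_derivs_at_0 f'_pos by (intro continuous_intros) auto
  moreover have "g 0 = \<kappa>" using f'_pos by (simp add: g_def)
  moreover have "deriv (deriv (deriv u)) \<rho> / deriv (deriv u) \<rho> = g (exp (\<kappa> * \<rho>))"
    if "exp (\<kappa> * \<rho>) < \<delta>" for \<rho>
    using \<kappa>_nonzero by (simp add: deriv_formulas[OF that] g_def power2_eq_square power3_eq_cube)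
  ultimately show ?thesis using tendsto_through_expansion[of g] by simp
qed

lemma potential_asymptotics:
  assumes "N - a / T = \<kappa>" "T \<noteq> 0"
  shows "((\<lambda>\<rho>. exp (N * \<rho> - u \<rho> / T) / logistic_density \<kappa> \<rho>) \<longlongrightarrow> exp (- f 0 / T)) F"
proof -
  have "isCont (\<lambda>x. (1 + x)\<^sup>2 * exp (- f x / T)) 0"
    using isCont_derivs_at_0 assms(2) by (intro continuous_intros) auto
  moreover have "exp (N * \<rho> - u \<rho> / T) / logistic_density \<kappa> \<rho>
      = (1 + exp (\<kappa> * \<rho>))\<^sup>2 * exp (- f (exp (\<kappa> * \<rho>)) / T)"
    if "exp (\<kappa> * \<rho>) < \<delta>" for \<rho>
  proof -
    have "N * \<rho> - u \<rho> / T = \<kappa> * \<rho> + (- f (exp (\<kappa> * \<rho>)) / T)"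
    proof -
      have "N = \<kappa> + a / T" using assms(1) by simp
      then have "N * \<rho> = \<kappa> * \<rho> + a * \<rho> / T" by (simp add: algebra_simps)
      then show ?thesis using expansion[OF that] by (simp add: add_divide_distrib)
    qed
    then have "exp (N * \<rho> - u \<rho> / T) = exp (\<kappa> * \<rho>) * exp (- f (exp (\<kappa> * \<rho>)) / T)"
      by (simp add: exp_add[symmetric])
    then show ?thesis
      using one_plus_exp_pos[of "\<kappa> * \<rho>"] by (simp add: logistic_density_def field_simps)
  qed
  ultimately show ?thesis
    using tendsto_through_expansion[of "\<lambda>x. (1 + x)\<^sup>2 * exp (- f x / T)"] by simp
qed

end

section \<open>The Kahler-Ricci flow in Case II\<close>

locale calabi_flow_case_II =
  fixes n k :: nat and T :: real and u :: "real \<Rightarrow> real \<Rightarrow> real"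
  assumes k_pos: "1 \<le> k" and k_less_n: "k < n" and T_pos: "0 < T"
    and kaehler: "\<And>t. t \<in> {0..<T} \<Longrightarrow>
        calabi_kaehler_potential k ((real n - real k) * (T - t)) ((real n + real k) * (T - t)) (u t)"
    and normalized: "\<And>t. t \<in> {0..<T} \<Longrightarrow> u t 0 = 0"
    and lim_bot: "\<And>t. t \<in> {0..<T} \<Longrightarrow> (deriv (u t) \<longlongrightarrow> (real n - real k) * (T - t)) at_bot"
    and lim_top: "\<And>t. t \<in> {0..<T} \<Longrightarrow> (deriv (u t) \<longlongrightarrow> (real n + real k) * (T - t)) at_top"
    and equation: "\<And>t. t \<in> {0..<T} \<Longrightarrow> \<exists>c. \<forall>\<rho>.
        u t \<rho> = u 0 \<rho> - t * (real n * \<rho> - (real n - 1) * ln (deriv (u t) \<rho>)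
                                   - ln (deriv (deriv (u t)) \<rho>)) + c"
begin

abbreviation u' where "u' t \<equiv> deriv (u t)"
abbreviation u'' where "u'' t \<equiv> deriv (deriv (u t))"
abbreviation u''' where "u''' t \<equiv> deriv (deriv (deriv (u t)))"

lemma n_minus_k_ge_1: "real n - real k \<ge> 1"
  using k_less_n by linarith

lemma zero_in_lifespan: "0 \<in> {0..<T}"
  using T_pos by simp

lemma potential_has_derivs:
  assumes "t \<in> {0..<T}"
  shows "(u t has_real_derivative u' t x) (at x)"
    "(u' t has_real_derivative u'' t x) (at x)"
    "(u'' t has_real_derivative u''' t x) (at x)"
    "(u''' t has_real_derivative deriv (u''' t) x) (at x)"
  using kaehler[OF assms] smooth_real_on_has_derivs[of "u t" UNIV x]
  by (auto simp: calabi_kaehler_potential_def)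

lemma deriv_pos: "t \<in> {0..<T} \<Longrightarrow> u' t x > 0"
  and second_deriv_pos: "t \<in> {0..<T} \<Longrightarrow> u'' t x > 0"
  using kaehler by (auto simp: calabi_kaehler_potential_def)

lemma deriv_bounds:
  assumes "t \<in> {0..<T}"
  shows "(real n - real k) * (T - t) < u' t \<rho> \<and> u' t \<rho> < (real n + real k) * (T - t)"
  using potential_has_derivs(2)[OF assms] second_deriv_pos[OF assms] lim_bot[OF assms] lim_top[OF assms]
  by (rule strictly_between_limits)

lemma potential_tendsto_0: "((\<lambda>t. u t \<rho>) \<longlongrightarrow> 0) (at_left T)"
proof (rule Lim_null_comparison)
  show "\<forall>\<^sub>F t in at_left T. norm (u t \<rho>) \<le> (real n + real k) * (T - t) * \<bar>\<rho>\<bar>"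
    using eventually_at_left_real[OF T_pos]
  proof eventually_elim
    case (elim t)
    then have t: "t \<in> {0..<T}" by simp
    have "norm (u t \<rho> - u t 0) \<le> (real n + real k) * (T - t) * norm (\<rho> - 0)"
    proof (rule field_differentiable_bound[OF convex_UNIV])
      show "(u t has_field_derivative u' t x) (at x within UNIV)" for x
        using potential_has_derivs(1)[OF t] by simp
      show "norm (u' t x) \<le> (real n + real k) * (T - t)" for x
        using deriv_bounds[OF t, of x] deriv_pos[OF t, of x] by simp
    qed auto
    then show ?case using normalized[OF t] by simp
  qed
  show "((\<lambda>t. (real n + real k) * (T - t) * \<bar>\<rho>\<bar>) \<longlongrightarrow> 0) (at_left T)"
    by (rule tendsto_eq_intros refl | simp)+
qed

lemma continuous_potential_derivs:
  assumes "t \<in> {0..<T}"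
  shows "continuous_on S (u t)" "continuous_on S (u'' t)" "continuous_on S (u''' t)"
  using potential_has_derivs[OF assms] by (meson DERIV_isCont continuous_at_imp_continuous_on)+

lemma initial_ends:
  obtains f1 \<delta>1 f2 \<delta>2 where
    "calabi_end (u 0) f1 ((real n - real k) * T) (real k) \<delta>1 at_bot"
    "calabi_end (u 0) f2 ((real n + real k) * T) (- real k) \<delta>2 at_top"
proof -
  have "calabi_kaehler_potential k ((real n - real k) * T) ((real n + real k) * T) (u 0)"
    using kaehler[OF zero_in_lifespan] by simp
  then obtain f1 \<delta>1 f2 \<delta>2 where
    f1: "\<delta>1 > 0" "smooth_real_on f1 {-\<delta>1<..<\<delta>1}" "deriv f1 0 > 0"
      "\<And>\<rho>. exp (real k * \<rho>) < \<delta>1 \<Longrightarrow> u 0 \<rho> = (real n - real k) * T * \<rho> + f1 (exp (real k * \<rho>))"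
    and f2: "\<delta>2 > 0" "smooth_real_on f2 {-\<delta>2<..<\<delta>2}" "deriv f2 0 > 0"
      "\<And>\<rho>. exp (- real k * \<rho>) < \<delta>2 \<Longrightarrow> u 0 \<rho> = (real n + real k) * T * \<rho> + f2 (exp (- real k * \<rho>))"
    unfolding calabi_kaehler_potential_def by blast
  have k: "real k > 0" using k_pos by simp
  have "((\<lambda>\<rho>. exp (real k * \<rho>)) \<longlongrightarrow> 0) at_bot"
    by (rule filterlim_compose[OF exp_at_bot])
      (rule filterlim_tendsto_pos_mult_at_bot[OF tendsto_const k filterlim_ident])
  with f1 have "calabi_end (u 0) f1 ((real n - real k) * T) (real k) \<delta>1 at_bot"
    using k by unfold_locales auto
  moreover have "((\<lambda>\<rho>. exp (- real k * \<rho>)) \<longlongrightarrow> 0) at_top"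
    by (rule filterlim_compose[OF exp_at_bot])
      (rule filterlim_tendsto_neg_mult_at_bot[OF tendsto_const _ filterlim_ident], use k in simp)
  with f2 have "calabi_end (u 0) f2 ((real n + real k) * T) (- real k) \<delta>2 at_top"
    using k by unfold_locales auto
  ultimately show thesis by (rule that)
qed

lemma initial_second_deriv_bounded:
  obtains K where "\<And>\<rho>. \<bar>ln (u'' 0 \<rho> / logistic_density k \<rho>)\<bar> \<le> K"
proof -
  obtain f1 \<delta>1 f2 \<delta>2 where
    bot: "calabi_end (u 0) f1 ((real n - real k) * T) (real k) \<delta>1 at_bot" and
    top: "calabi_end (u 0) f2 ((real n + real k) * T) (- real k) \<delta>2 at_top"
    by (rule initial_ends)
  show thesis
  proof (rule bounded_ln_of_tendsto_at_bot_at_top)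
    show "continuous_on UNIV (\<lambda>\<rho>. u'' 0 \<rho> / logistic_density k \<rho>)"
      using continuous_potential_derivs[OF zero_in_lifespan] logistic_density_pos
      by (intro continuous_intros continuous_on_logistic_density) (auto simp: less_le)
    show "u'' 0 \<rho> / logistic_density k \<rho> > 0" for \<rho>
      using second_deriv_pos[OF zero_in_lifespan] logistic_density_pos by simp
    show "((\<lambda>\<rho>. u'' 0 \<rho> / logistic_density k \<rho>) \<longlongrightarrow> (real k)\<^sup>2 * deriv f1 0) at_bot"
      using calabi_end.second_deriv_asymptotics[OF bot] .
    show "((\<lambda>\<rho>. u'' 0 \<rho> / logistic_density k \<rho>) \<longlongrightarrow> (- real k)\<^sup>2 * deriv f2 0) at_top"
      using calabi_end.second_deriv_asymptotics[OF top] by (simp add: logistic_density_minus)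
    show "(real k)\<^sup>2 * deriv f1 0 > 0" "(- real k)\<^sup>2 * deriv f2 0 > 0"
      using calabi_end.f'_pos[OF bot] calabi_end.f'_pos[OF top] k_pos by auto
  qed (rule that)
qed

lemma initial_potential_bounded:
  obtains K where "\<And>\<rho>. \<bar>real n * \<rho> - u 0 \<rho> / T - ln (logistic_density k \<rho>)\<bar> \<le> K"
proof -
  obtain f1 \<delta>1 f2 \<delta>2 where
    bot: "calabi_end (u 0) f1 ((real n - real k) * T) (real k) \<delta>1 at_bot" and
    top: "calabi_end (u 0) f2 ((real n + real k) * T) (- real k) \<delta>2 at_top"
    by (rule initial_ends)
  obtain K where K: "\<And>\<rho>. \<bar>ln (exp (real n * \<rho> - u 0 \<rho> / T) / logistic_density k \<rho>)\<bar> \<le> K"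
  proof (rule bounded_ln_of_tendsto_at_bot_at_top)
    show "continuous_on UNIV (\<lambda>\<rho>. exp (real n * \<rho> - u 0 \<rho> / T) / logistic_density k \<rho>)"
      using continuous_potential_derivs[OF zero_in_lifespan] logistic_density_pos T_pos
      by (intro continuous_intros continuous_on_logistic_density) (auto simp: less_le)
    show "exp (real n * \<rho> - u 0 \<rho> / T) / logistic_density k \<rho> > 0" for \<rho>
      using logistic_density_pos by simp
    show "((\<lambda>\<rho>. exp (real n * \<rho> - u 0 \<rho> / T) / logistic_density k \<rho>)
        \<longlongrightarrow> exp (- f1 0 / T)) at_bot"
      using calabi_end.potential_asymptotics[OF bot] T_pos by simp
    show "((\<lambda>\<rho>. exp (real n * \<rho> - u 0 \<rho> / T) / logistic_density k \<rho>)
        \<longlongrightarrow> exp (- f2 0 / T)) at_top"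
      using calabi_end.potential_asymptotics[OF top] T_pos by (simp add: logistic_density_minus)
  qed auto
  have "ln (exp (real n * \<rho> - u 0 \<rho> / T) / logistic_density k \<rho>)
      = real n * \<rho> - u 0 \<rho> / T - ln (logistic_density k \<rho>)" for \<rho>
    using logistic_density_pos[of "real k" \<rho>] by (simp add: ln_div less_imp_neq[symmetric])
  with K show thesis by (intro that) simp
qed

lemma initial_third_deriv_ratio_bounded:
  obtains K where "\<And>\<rho>. \<bar>u''' 0 \<rho> / u'' 0 \<rho>\<bar> \<le> K"
proof -
  obtain f1 \<delta>1 f2 \<delta>2 where
    bot: "calabi_end (u 0) f1 ((real n - real k) * T) (real k) \<delta>1 at_bot" and
    top: "calabi_end (u 0) f2 ((real n + real k) * T) (- real k) \<delta>2 at_top"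
    by (rule initial_ends)
  show thesis
  proof (rule bounded_of_tendsto_at_bot_at_top)
    show "continuous_on UNIV (\<lambda>\<rho>. u''' 0 \<rho> / u'' 0 \<rho>)"
      using continuous_potential_derivs[OF zero_in_lifespan] second_deriv_pos[OF zero_in_lifespan]
      by (intro continuous_intros) (auto simp: less_le)
  qed (use calabi_end.third_deriv_ratio_asymptotics[OF bot]
        calabi_end.third_deriv_ratio_asymptotics[OF top] that in auto)
qed

lemma flow_equation:
  assumes "t \<in> {0..<T}"
  obtains c where "\<And>x. t * (ln (u'' t x) + (real n - 1) * ln (u' t x)) = u t x - u 0 x + t * real n * x - c"
proof -
  from equation[OF assms] obtain c where "\<And>x. u t x = u 0 x - t * (real n * x
      - (real n - 1) * ln (u' t x) - ln (u'' t x)) + c" by blast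
  then show thesis by (intro that[of c]) (simp add: algebra_simps)
qed

lemma flow_equation_deriv:
  assumes "t \<in> {0..<T}"
  shows "u' t x - u' 0 x = t * (- real n + (real n - 1) * (u'' t x / u' t x) + u''' t x / u'' t x)"
proof -
  obtain c where c: "\<And>x. u t x = u 0 x - t * (real n * x
      - (real n - 1) * ln (u' t x) - ln (u'' t x)) + c"
    using equation[OF assms] by blast
  define R where "R = u' 0 x - t * (real n - (real n - 1) * (u'' t x / u' t x) - u''' t x / u'' t x)"
  have "((\<lambda>y. u 0 y - t * (real n * y - (real n - 1) * ln (u' t y) - ln (u'' t y)) + c)
      has_real_derivative R) (at x)"
    unfolding R_def
    using potential_has_derivs(1)[OF zero_in_lifespan] potential_has_derivs(2,3)[OF assms]
      deriv_pos[OF assms, of x] second_deriv_pos[OF assms]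
    by (auto intro!: derivative_eq_intros simp: field_simps)
  then have "(u t has_real_derivative R) (at x)"
    by (rule has_field_derivative_transform_within_open[OF _ open_UNIV UNIV_I]) (rule c[symmetric])
  with potential_has_derivs(1)[OF assms] have "u' t x = R" by (rule DERIV_unique)
  then show ?thesis unfolding R_def by (simp add: algebra_simps)
qed

lemma second_deriv_log_bounded:
  obtains \<Lambda> where
    "\<And>t \<rho>. t \<in> {0..<T} \<Longrightarrow> \<bar>ln (u'' t \<rho> / ((T - t) * logistic_density k \<rho>))\<bar> \<le> \<Lambda>"
proof -
  obtain KA where KA: "\<And>\<rho>. \<bar>ln (u'' 0 \<rho> / logistic_density k \<rho>)\<bar> \<le> KA"
    using initial_second_deriv_bounded by blast
  obtain KG where KG: "\<And>\<rho>. \<bar>real n * \<rho> - u 0 \<rho> / T - ln (logistic_density k \<rho>)\<bar> \<le> KG"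
    using initial_potential_bounded by blast
  define D where "D = (real n - 1) * (ln (real n + real k) - ln (real n - real k))"
  have "KG \<ge> 0" using KG[of 0] by linarith
  have "D \<ge> 0" unfolding D_def using n_minus_k_ge_1 by (intro mult_nonneg_nonneg) auto
  have ln_split: "ln (u'' t \<rho> / ((T - t) * logistic_density k \<rho>))
      = ln (u'' t \<rho>) - ln (T - t) - ln (logistic_density k \<rho>)" if "t \<in> {0..<T}" for t \<rho>
    using that second_deriv_pos[OF that, of \<rho>] logistic_density_pos[of "real k" \<rho>]
    by (simp add: ln_div ln_mult)
  have initial: "\<bar>ln (u'' 0 \<rho>) - ln (logistic_density k \<rho>)\<bar> \<le> KA" for \<rho>
    using KA[of \<rho>] second_deriv_pos[OF zero_in_lifespan, of \<rho>] logistic_density_pos[of "real k" \<rho>]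
    by (simp add: ln_div)
  have "\<bar>ln (u'' t \<rho> / ((T - t) * logistic_density k \<rho>))\<bar> \<le> KA + 2 * KG + \<bar>ln T\<bar> + D"
    if t: "t \<in> {0..<T}" for t \<rho>
  proof (cases "t = 0")
    case True
    then show ?thesis
      using ln_split[OF t, of \<rho>] initial[of \<rho>] \<open>KG \<ge> 0\<close> \<open>D \<ge> 0\<close>
        abs_ge_self[of "ln T"] abs_ge_minus_self[of "ln T"]
      unfolding abs_le_iff by simp
  next
    case False
    with t have "0 < t" "t < T" by auto
    obtain c where c: "\<And>x. t * (ln (u'' t x) + (real n - 1) * ln (u' t x))
        = u t x - u 0 x + t * real n * x - c"
      using flow_equation[OF t] by blast
    have "\<bar>ln (u'' t \<rho>) - ln (T - t) - (real n * \<rho> - u 0 \<rho> / T)\<bar> \<le> (KA + KG) + \<bar>ln T\<bar> + D"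
      unfolding D_def
    proof (rule log_second_deriv_estimate[where U = "u t" and V = "u 0" and s = "T - t"])
      show "\<bar>ln (u'' 0 x) + u 0 x / T - real n * x\<bar> \<le> KA + KG" for x
        using initial[of x] KG[of x] by (simp add: abs_le_iff)
      show "(u' 0 \<longlongrightarrow> (real n - real k) * T) at_bot" "(u' 0 \<longlongrightarrow> (real n + real k) * T) at_top"
        using lim_bot[OF zero_in_lifespan] lim_top[OF zero_in_lifespan] by simp_all
    qed (use \<open>0 < t\<close> \<open>t < T\<close> n_minus_k_ge_1 c potential_has_derivs[OF t] potential_has_derivs[OF zero_in_lifespan]
          deriv_bounds[OF t] second_deriv_pos[OF t] second_deriv_pos[OF zero_in_lifespan]
          lim_bot[OF t] lim_top[OF t] in auto)
    then show ?thesis using ln_split[OF t, of \<rho>] KG[of \<rho>] by (simp add: abs_le_iff)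
  qed
  then show thesis by (rule that)
qed

lemma second_deriv_comparable:
  obtains \<Lambda> where "\<And>t \<rho>. t \<in> {0..<T} \<Longrightarrow>
    exp (- \<Lambda>) * ((T - t) * logistic_density k \<rho>) \<le> u'' t \<rho> \<and>
    u'' t \<rho> \<le> exp \<Lambda> * ((T - t) * logistic_density k \<rho>)"
proof -
  obtain \<Lambda> where \<Lambda>:
    "\<And>t \<rho>. t \<in> {0..<T} \<Longrightarrow> \<bar>ln (u'' t \<rho> / ((T - t) * logistic_density k \<rho>))\<bar> \<le> \<Lambda>"
    using second_deriv_log_bounded by blast
  have "exp (- \<Lambda>) * ((T - t) * logistic_density k \<rho>) \<le> u'' t \<rho> \<and>
      u'' t \<rho> \<le> exp \<Lambda> * ((T - t) * logistic_density k \<rho>)" if t: "t \<in> {0..<T}" for t \<rho>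
  proof -
    define g where "g = (T - t) * logistic_density k \<rho>"
    have "g > 0" using t logistic_density_pos[of "real k" \<rho>] by (simp add: g_def)
    moreover have "u'' t \<rho> / g > 0" using \<open>g > 0\<close> second_deriv_pos[OF t] by simp
    moreover have "- \<Lambda> \<le> ln (u'' t \<rho> / g) \<and> ln (u'' t \<rho> / g) \<le> \<Lambda>"
      using \<Lambda>[OF t, of \<rho>] unfolding g_def by linarith
    ultimately have "exp (- \<Lambda>) \<le> u'' t \<rho> / g \<and> u'' t \<rho> / g \<le> exp \<Lambda>"
      by (metis exp_le_cancel_iff exp_ln)
    with \<open>g > 0\<close> show ?thesis unfolding g_def[symmetric] by (simp add: field_simps)
  qed
  then show thesis by (rule that)
qed

lemma third_deriv_ratio_bounded:
  obtains C where "\<And>t \<rho>. t \<in> {0..<T} \<Longrightarrow> \<bar>u''' t \<rho> / u'' t \<rho>\<bar> \<le> C"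
proof -
  obtain \<Lambda> where \<Lambda>: "\<And>t \<rho>. t \<in> {0..<T} \<Longrightarrow>
      exp (- \<Lambda>) * ((T - t) * logistic_density k \<rho>) \<le> u'' t \<rho> \<and>
      u'' t \<rho> \<le> exp \<Lambda> * ((T - t) * logistic_density k \<rho>)"
    using second_deriv_comparable by blast
  obtain K0 where K0: "\<And>\<rho>. \<bar>u''' 0 \<rho> / u'' 0 \<rho>\<bar> \<le> K0"
    using initial_third_deriv_ratio_bounded by blast
  define K1 where "K1 = exp \<Lambda> / (real n - real k)"
  have "K1 \<ge> 0" unfolding K1_def using n_minus_k_ge_1 by simp
  have ratio_bound: "u'' t x / u' t x \<le> K1" if t: "t \<in> {0..<T}" for t x
  proof -
    have "(T - t) * logistic_density k x \<le> T - t"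
      using logistic_density_le_1[of "real k" x] t by (simp add: mult_left_le)
    then have "exp \<Lambda> * ((T - t) * logistic_density k x) \<le> exp \<Lambda> * (T - t)"
      by (rule mult_left_mono) simp
    with \<Lambda>[OF t, of x] have "u'' t x \<le> exp \<Lambda> * (T - t)" by linarith
    moreover have "(real n - real k) * (T - t) \<le> u' t x" using deriv_bounds[OF t, of x] by simp
    ultimately have "u'' t x / u' t x \<le> exp \<Lambda> * (T - t) / ((real n - real k) * (T - t))"
      using second_deriv_pos[OF t, of x] t n_minus_k_ge_1 by (intro frac_le) auto
    also have "\<dots> = K1" unfolding K1_def using t by simp
    finally show ?thesis .
  qed
  have "\<bar>u''' t \<rho> / u'' t \<rho>\<bar> \<le> K0 + 2 * (real n - 1) * K1 + 3 * real n" if t: "t \<in> {0..<T}" for t \<rho>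
  proof (cases "t = 0")
    case True
    have "0 \<le> 2 * (real n - 1) * K1" using \<open>K1 \<ge> 0\<close> n_minus_k_ge_1 by simp
    with True K0[of \<rho>] show ?thesis by simp
  next
    case False
    with t have "0 < t" by simp
    show ?thesis
    proof (rule third_deriv_ratio_estimate[where U' = "u' t" and U'' = "u'' t" and U''' = "u''' t"
          and V' = "u' 0" and V'' = "u'' 0" and V''' = "u''' 0" and t = t and x = \<rho>])
      show "\<bar>(real n - real k) * (T - t) - (real n - real k) * T\<bar> \<le> 2 * real n * t"
        using \<open>0 < t\<close> k_less_n by (simp add: algebra_simps abs_mult)
      have "(real n + real k) * t \<le> (2 * real n) * t"
        using \<open>0 < t\<close> k_less_n by (intro mult_right_mono) auto
      moreover have "(real n + real k) * (T - t) - (real n + real k) * T = - ((real n + real k) * t)"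
        by (simp add: algebra_simps)
      ultimately show "\<bar>(real n + real k) * (T - t) - (real n + real k) * T\<bar> \<le> 2 * real n * t"
        using \<open>0 < t\<close> by (simp add: abs_of_nonneg)
      show "((\<lambda>x. u' t x - u' 0 x) \<longlongrightarrow> (real n - real k) * (T - t) - (real n - real k) * T) at_bot"
        using lim_bot[OF t] lim_bot[OF zero_in_lifespan] by (auto intro!: tendsto_intros)
      show "((\<lambda>x. u' t x - u' 0 x) \<longlongrightarrow> (real n + real k) * (T - t) - (real n + real k) * T) at_top"
        using lim_top[OF t] lim_top[OF zero_in_lifespan] by (auto intro!: tendsto_intros)
      show "u' t x - u' 0 x = t * (- real n + (real n - 1) * (u'' t x / u' t x) + u''' t x / u'' t x)"
        for x by (rule flow_equation_deriv[OF t])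
      show "0 \<le> real n - 1" using n_minus_k_ge_1 by simp
    qed (use \<open>0 < t\<close> potential_has_derivs[OF t] potential_has_derivs[OF zero_in_lifespan]
          deriv_pos[OF t] second_deriv_pos[OF t] second_deriv_pos[OF zero_in_lifespan]
          ratio_bound[OF t] K0 in simp_all)
  qed
  then show thesis by (rule that)
qed

lemma second_and_third_deriv_estimates:
  "\<exists>C>0. \<forall>t\<in>{0..<T}. \<forall>\<rho>.
     inverse C * logistic_density k \<rho> * (T - t) < u'' t \<rho> \<and>
     u'' t \<rho> \<le> C * logistic_density k \<rho> * (T - t) \<and>
     \<bar>u''' t \<rho>\<bar> / u'' t \<rho> \<le> C"
proof -
  obtain \<Lambda> where \<Lambda>: "\<And>t \<rho>. t \<in> {0..<T} \<Longrightarrow>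
      exp (- \<Lambda>) * ((T - t) * logistic_density k \<rho>) \<le> u'' t \<rho> \<and>
      u'' t \<rho> \<le> exp \<Lambda> * ((T - t) * logistic_density k \<rho>)"
    using second_deriv_comparable by blast
  obtain C3 where C3: "\<And>t \<rho>. t \<in> {0..<T} \<Longrightarrow> \<bar>u''' t \<rho> / u'' t \<rho>\<bar> \<le> C3"
    using third_deriv_ratio_bounded by blast
  define C where "C = max (exp \<Lambda> + 1) C3"
  have "C > 0" unfolding C_def by (smt (verit) exp_gt_zero max.cobounded1)
  have "inverse C < exp (- \<Lambda>)"
  proof -
    have "inverse C \<le> inverse (exp \<Lambda> + 1)"
      unfolding C_def by (rule le_imp_inverse_le) (auto simp: add_pos_pos)
    also have "\<dots> < inverse (exp \<Lambda>)" by (rule less_imp_inverse_less) auto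
    finally show ?thesis by (simp add: exp_minus)
  qed
  have "inverse C * logistic_density k \<rho> * (T - t) < u'' t \<rho> \<and>
      u'' t \<rho> \<le> C * logistic_density k \<rho> * (T - t) \<and> \<bar>u''' t \<rho>\<bar> / u'' t \<rho> \<le> C"
    if t: "t \<in> {0..<T}" for t \<rho>
  proof (intro conjI)
    have g: "(T - t) * logistic_density k \<rho> > 0" using t logistic_density_pos[of "real k" \<rho>] by simp
    have "inverse C * ((T - t) * logistic_density k \<rho>) < exp (- \<Lambda>) * ((T - t) * logistic_density k \<rho>)"
      using \<open>inverse C < exp (- \<Lambda>)\<close> g by (rule mult_strict_right_mono)
    then show "inverse C * logistic_density k \<rho> * (T - t) < u'' t \<rho>"
      using \<Lambda>[OF t, of \<rho>] by (simp add: algebra_simps)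
    have "exp \<Lambda> * ((T - t) * logistic_density k \<rho>) \<le> C * ((T - t) * logistic_density k \<rho>)"
      using g unfolding C_def by (intro mult_right_mono) auto
    then show "u'' t \<rho> \<le> C * logistic_density k \<rho> * (T - t)"
      using \<Lambda>[OF t, of \<rho>] by (simp add: algebra_simps)
    show "\<bar>u''' t \<rho>\<bar> / u'' t \<rho> \<le> C"
      using C3[OF t, of \<rho>] second_deriv_pos[OF t, of \<rho>] unfolding C_def by simp
  qed
  with \<open>C > 0\<close> show ?thesis by blast
qed

end

theorem mainTheorem10:
  fixes n k :: nat and a0 b0 T :: real and u :: "real \<Rightarrow> real \<Rightarrow> real"
  assumes k_ge: "1 \<le> k" and k_le: "k \<le> n - 1"
    and a0_pos: "0 < a0" and a0_b0: "a0 < b0"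
    and caseII: "a0 * (real n + real k) = b0 * (real n - real k)"
    and T_def: "T = a0 / (real n - real k)"
    and kaehler: "\<And>t. t \<in> {0..<T} \<Longrightarrow>
        calabi_kaehler_potential k (a0 + (real k - real n) * t) (b0 - (real k + real n) * t) (u t)"
    and normalized: "\<And>t. t \<in> {0..<T} \<Longrightarrow> u t 0 = 0"
    and lim_bot: "\<And>t. t \<in> {0..<T} \<Longrightarrow>
        (deriv (u t) \<longlongrightarrow> a0 + (real k - real n) * t) at_bot"
    and lim_top: "\<And>t. t \<in> {0..<T} \<Longrightarrow>
        (deriv (u t) \<longlongrightarrow> b0 - (real k + real n) * t) at_top"
    and equation: "\<And>t. t \<in> {0..<T} \<Longrightarrow> \<exists>c. \<forall>\<rho>.
        u t \<rho> = u 0 \<rho> - t * (real n * \<rho> - (real n - 1) * ln (deriv (u t) \<rho>)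
                                   - ln (deriv (deriv (u t)) \<rho>)) + c"
  shows "(\<forall>t\<in>{0..<T}. \<forall>\<rho>. (real n - real k) * (T - t) < deriv (u t) \<rho> \<and>
                              deriv (u t) \<rho> < (real n + real k) * (T - t))
       \<and> (\<forall>\<rho>. ((\<lambda>t. u t \<rho>) \<longlongrightarrow> 0) (at_left T))
       \<and> (\<exists>C>0. \<forall>t\<in>{0..<T}. \<forall>\<rho>.
            inverse C * (exp (real k * \<rho>) / (1 + exp (real k * \<rho>))\<^sup>2) * (T - t)
               < deriv (deriv (u t)) \<rho> \<and>
            deriv (deriv (u t)) \<rho>
               \<le> C * (exp (real k * \<rho>) / (1 + exp (real k * \<rho>))\<^sup>2) * (T - t) \<and>
            \<bar>deriv (deriv (deriv (u t))) \<rho>\<bar> / deriv (deriv (u t)) \<rho> \<le> C)"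
proof -
  have "k < n" using k_ge k_le by linarith
  then have a0_eq: "a0 = (real n - real k) * T" using T_def by simp
  with caseII have "b0 * (real n - real k) = ((real n + real k) * T) * (real n - real k)"
    by (simp add: algebra_simps)
  with \<open>k < n\<close> have b0_eq: "b0 = (real n + real k) * T" by simp
  have ends: "a0 + (real k - real n) * t = (real n - real k) * (T - t)"
    "b0 - (real k + real n) * t = (real n + real k) * (T - t)" for t
    unfolding a0_eq b0_eq by (simp_all add: algebra_simps)
  have "0 < T" using a0_pos \<open>k < n\<close> unfolding a0_eq by (simp add: zero_less_mult_iff)
  interpret calabi_flow_case_II n k T u
    using \<open>k < n\<close> k_ge \<open>0 < T\<close> kaehler normalized lim_bot lim_top equation
    by unfold_locales (simp_all add: ends)
  show ?thesis
    using deriv_bounds potential_tendsto_0 second_and_third_deriv_estimates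
    unfolding logistic_density_def by blast
qed

end
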